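(* Let $G$ be a finite group, $A_0=\operatorname{Aut}(G)$, and let $S_0$ be an $\mathcal{L}(A_0)$-system over $G$ in the variables $Y=\{y_{ij}\mid i\in\mathbb{Z},1\le j\le n\}$. Then for every finite $Z\subseteq Y$ there exists a finite subsystem $S_1\subseteq S_0$ which is $Z$-equivalent to $S_0$.
   Context: $\mathcal{L}(A_0)$ is the group language $\{\cdot,{}^{-1},1\}$ with a unary function symbol for each $\phi\in A_0$, interpreted as $\phi$; an $\mathcal{L}(A_0)$-equation in $Y$ is $t=1$ for a term $t$ involving finitely many variables of $Y$, a system is any set of such equations, and its solution set $V_G(S)$ consists of the points $(p_{ij}\mid i\in\mathbb{Z},1\le j\le n)\in G^{Y}$ satisfying all its equations. Two systems $S_0,S_1$ in variables $Y$ are $Z$-equivalent ($Z\subseteq Y$) if the projections of $V_G(S_0)$ and $V_G(S_1)$ onto the coordinates in $Z$ coincide. *)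

theory Defs
  imports "HOL-Algebra.Bij" "HOL-Library.FuncSet"
begin

text \<open>Terms of the language L(A0): group language {mult, inv, 1} plus unary
  function symbols of type 'f (later instantiated by automorphisms).\<close>

datatype ('v, 'f) lterm =
    LVar 'v
  | LOne
  | LMul "('v, 'f) lterm" "('v, 'f) lterm"
  | LInv "('v, 'f) lterm"
  | LApp 'f "('v, 'f) lterm"

fun lvars :: "('v, 'f) lterm \<Rightarrow> 'v set" where
  "lvars (LVar v) = {v}"
| "lvars LOne = {}"
| "lvars (LMul s t) = lvars s \<union> lvars t"
| "lvars (LInv t) = lvars t"
| "lvars (LApp f t) = lvars t"

fun lfuns :: "('v, 'f) lterm \<Rightarrow> 'f set" where
  "lfuns (LVar v) = {}"
| "lfuns LOne = {}"
| "lfuns (LMul s t) = lfuns s \<union> lfuns t"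
| "lfuns (LInv t) = lfuns t"
| "lfuns (LApp f t) = lfuns t"

fun leval :: "('a, 'b) monoid_scheme \<Rightarrow> ('v \<Rightarrow> 'a) \<Rightarrow> ('v, 'a \<Rightarrow> 'a) lterm \<Rightarrow> 'a" where
  "leval G p (LVar v) = p v"
| "leval G p LOne = \<one>\<^bsub>G\<^esub>"
| "leval G p (LMul s t) = leval G p s \<otimes>\<^bsub>G\<^esub> leval G p t"
| "leval G p (LInv t) = inv\<^bsub>G\<^esub> (leval G p t)"
| "leval G p (LApp f t) = f (leval G p t)"

text \<open>Variables Y = {y_ij | i \<in> Z, 1 \<le> j \<le> n}, y_ij represented as (i, j).\<close>
definition Yvars :: "nat \<Rightarrow> (int \<times> nat) set" where
  "Yvars n = {(i, j). 1 \<le> j \<and> j \<le> n}"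

text \<open>An L(A0)-system in the variables Y: a set of terms (each equation t = 1 is
  represented by t) using only variables from Y and function symbols from A0.\<close>
definition is_system :: "('a \<Rightarrow> 'a) set \<Rightarrow> 'v set \<Rightarrow> ('v, 'a \<Rightarrow> 'a) lterm set \<Rightarrow> bool" where
  "is_system A0 Y S \<longleftrightarrow> (\<forall>t\<in>S. lvars t \<subseteq> Y \<and> lfuns t \<subseteq> A0)"

definition solset :: "('a, 'b) monoid_scheme \<Rightarrow> 'v set \<Rightarrow> ('v, 'a \<Rightarrow> 'a) lterm set \<Rightarrow> ('v \<Rightarrow> 'a) set" where
  "solset G Y S = {p \<in> Y \<rightarrow>\<^sub>E carrier G. \<forall>t\<in>S. leval G p t = \<one>\<^bsub>G\<^esub>}"

definition Z_equivalent :: "('a, 'b) monoid_scheme \<Rightarrow> 'v set \<Rightarrow> 'v set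
    \<Rightarrow> ('v, 'a \<Rightarrow> 'a) lterm set \<Rightarrow> ('v, 'a \<Rightarrow> 'a) lterm set \<Rightarrow> bool" where
  "Z_equivalent G Y Z S0 S1 \<longleftrightarrow>
     (\<lambda>p. restrict p Z) ` solset G Y S0 = (\<lambda>p. restrict p Z) ` solset G Y S1"

end

theory Submission
  imports Defs "HOL-Analysis.Function_Topology" "HOL-Analysis.Product_Topology"
begin

text \<open>Give \<open>G\<^sup>Y\<close> the product of the discrete topologies on the finite set \<open>G\<close>; by Tychonoff it
  is compact. Every term depends on finitely many coordinates only, so each equation \<open>t = 1\<close>
  cuts out a closed set, and so does each fibre of the projection to \<open>G\<^sup>Z\<close>. If a point \<open>q\<close> of
  the finite set \<open>G\<^sup>Z\<close> is not the projection of a solution of \<open>S\<^sub>0\<close>, the fibre over \<open>q\<close> misses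
  the intersection of the closed sets of all equations of \<open>S\<^sub>0\<close>, hence by compactness already
  that of finitely many of them. Collecting these finitely many equations for the finitely
  many such \<open>q\<close> gives \<open>S\<^sub>1\<close>.\<close>

abbreviation locally_constant :: "'x topology \<Rightarrow> ('x \<Rightarrow> 'y) \<Rightarrow> bool" where
  "locally_constant X f \<equiv> continuous_map X (discrete_topology UNIV) f"

lemma locally_constant_compose:
  assumes "locally_constant X f"
  shows "locally_constant X (\<lambda>x. h (f x))"
  using continuous_map_compose[OF assms, of "discrete_topology UNIV" h] by (simp add: o_def)

lemma locally_constant_compose2:
  assumes "locally_constant X f" and "locally_constant X g"
  shows "locally_constant X (\<lambda>x. h (f x) (g x))"
proof -
  have "continuous_map X (discrete_topology UNIV) (\<lambda>x. (f x, g x))"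
    using continuous_map_pairedI[OF assms]
    by (simp flip: prod_topology_discrete_topology)
  then show ?thesis
    using locally_constant_compose[of X "\<lambda>x. (f x, g x)" "case_prod h"] by simp
qed

lemma closedin_locally_constant_fibre:
  assumes "locally_constant X f"
  shows "closedin X {x \<in> topspace X. f x = a}"
  using closedin_continuous_map_preimage[OF assms, of "{a}"] by simp

lemma locally_constant_restrict:
  assumes "finite Z" and "\<And>z. z \<in> Z \<Longrightarrow> locally_constant X (f z)"
  shows "locally_constant X (\<lambda>x. restrict (\<lambda>z. f z x) Z)"
  using assms
proof (induction Z rule: finite_induct)
  case empty
  then show ?case by simp
next
  case (insert z Z)
  have "locally_constant X (\<lambda>x. restrict (\<lambda>z. f z x) Z)"
    by (rule insert.IH) (use insert.prems in blast)
  moreover have "locally_constant X (f z)"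
    using insert.prems by blast
  ultimately have "locally_constant X (\<lambda>x. (restrict (\<lambda>z. f z x) Z)(z := f z x))"
    by (rule locally_constant_compose2[where h = "\<lambda>r a. r(z := a)"])
  moreover have "(\<lambda>x. restrict (\<lambda>z. f z x) (insert z Z)) = (\<lambda>x. (restrict (\<lambda>z. f z x) Z)(z := f z x))"
    by (auto simp: restrict_def fun_eq_iff)
  ultimately show ?case by (simp only:)
qed

lemma locally_constant_product_projection:
  "locally_constant (product_topology (\<lambda>_. discrete_topology C) Y) (\<lambda>p. p v)"
proof (cases "v \<in> Y")
  case True
  have "continuous_map (product_topology (\<lambda>_. discrete_topology C) Y)
      (subtopology (discrete_topology UNIV) C) (\<lambda>p. p v)"
    using continuous_map_product_projection[OF True] by simp
  then show ?thesis
    using continuous_map_in_subtopology by blast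
next
  case False
  show ?thesis
    by (rule continuous_map_eq[of _ _ "\<lambda>_. undefined"])
      (use False in \<open>auto simp: PiE_iff extensional_def\<close>)
qed

lemma locally_constant_leval:
  "locally_constant (product_topology (\<lambda>_. discrete_topology C) Y) (\<lambda>p. leval G p t)"
proof (induction t)
  case (LVar v)
  show ?case by (simp add: locally_constant_product_projection)
next
  case LOne
  show ?case by simp
next
  case (LMul s t)
  then show ?case using locally_constant_compose2[where h = "mult G"] by simp
next
  case (LInv t)
  then show ?case using locally_constant_compose[where h = "m_inv G"] by simp
next
  case (LApp f t)
  then show ?case using locally_constant_compose[where h = f] by simp
qed

lemma compact_space_closedin_Int_INT_empty:
  assumes "compact_space X" and "closedin X K" and "\<And>i. i \<in> I \<Longrightarrow> closedin X (C i)"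
    and "K \<inter> (\<Inter>i\<in>I. C i) = {}"
  obtains F where "finite F" and "F \<subseteq> I" and "K \<inter> (\<Inter>i\<in>F. C i) = {}"
proof -
  have "compactin X K"
    using assms(1,2) by (rule closedin_compact_space)
  then obtain \<F> where "finite \<F>" "\<F> \<subseteq> C ` I" "K \<inter> \<Inter>\<F> = {}"
    using assms(3,4) unfolding compactin_fip by blast
  moreover from this obtain F where "F \<subseteq> I" "finite F" "\<F> = C ` F"
    by (metis finite_subset_image)
  ultimately show thesis
    using that by blast
qed

lemma solset_antimono: "S1 \<subseteq> S0 \<Longrightarrow> solset G Y S0 \<subseteq> solset G Y S1"
  unfolding solset_def by auto

lemma not_in_restrict_solset_finite_subsystem:
  assumes "finite (carrier G)" and "finite Z" and "q \<notin> (\<lambda>p. restrict p Z) ` solset G Y S"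
  obtains F where "finite F" and "F \<subseteq> S" and "q \<notin> (\<lambda>p. restrict p Z) ` solset G Y F"
proof -
  define X where "X = product_topology (\<lambda>_. discrete_topology (carrier G)) Y"
  define K where "K = {p \<in> topspace X. restrict p Z = q}"
  define E where "E = (\<lambda>t. {p \<in> topspace X. leval G p t = \<one>\<^bsub>G\<^esub>})"
  have fibre: "K \<inter> (\<Inter>t\<in>T. E t) = {p \<in> solset G Y T. restrict p Z = q}" for T
    by (auto simp: K_def E_def X_def solset_def)
  have "compact_space X"
    using assms(1) by (simp add: X_def compact_space_product_topology compact_space_discrete_topology)
  moreover have "closedin X K"
    unfolding K_def X_def
    by (rule closedin_locally_constant_fibre locally_constant_restrict[OF assms(2)]
        locally_constant_product_projection)+
  moreover have "closedin X (E t)" for t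
    unfolding E_def X_def by (rule closedin_locally_constant_fibre locally_constant_leval)+
  moreover have "K \<inter> (\<Inter>t\<in>S. E t) = {}"
    using assms(3) by (auto simp: fibre)
  ultimately obtain F where "finite F" and "F \<subseteq> S" and "K \<inter> (\<Inter>t\<in>F. E t) = {}"
    by (rule compact_space_closedin_Int_INT_empty)
  moreover from this(3) have "q \<notin> (\<lambda>p. restrict p Z) ` solset G Y F"
    by (auto simp: fibre)
  ultimately show thesis
    using that by blast
qed

lemma Z_equivalent_subsystemI:
  assumes "S1 \<subseteq> S" and "Z \<subseteq> Y"
    and "\<And>q. q \<in> Z \<rightarrow>\<^sub>E carrier G \<Longrightarrow> q \<notin> (\<lambda>p. restrict p Z) ` solset G Y S \<Longrightarrow>
      q \<notin> (\<lambda>p. restrict p Z) ` solset G Y S1"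
  shows "Z_equivalent G Y Z S S1"
  unfolding Z_equivalent_def
proof
  show "(\<lambda>p. restrict p Z) ` solset G Y S \<subseteq> (\<lambda>p. restrict p Z) ` solset G Y S1"
    using solset_antimono[OF assms(1)] by blast
next
  show "(\<lambda>p. restrict p Z) ` solset G Y S1 \<subseteq> (\<lambda>p. restrict p Z) ` solset G Y S"
  proof
    fix q assume q: "q \<in> (\<lambda>p. restrict p Z) ` solset G Y S1"
    moreover from q have "q \<in> Z \<rightarrow>\<^sub>E carrier G"
      using assms(2) by (auto simp: solset_def)
    ultimately show "q \<in> (\<lambda>p. restrict p Z) ` solset G Y S"
      using assms(3) by blast
  qed
qed

theorem finite_subsystem_Z_equivalent:
  assumes "finite (carrier G)" and "finite Z" and "Z \<subseteq> Y"
  obtains S1 where "finite S1" and "S1 \<subseteq> S" and "Z_equivalent G Y Z S S1"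
proof -
  define Q where "Q = (Z \<rightarrow>\<^sub>E carrier G) - (\<lambda>p. restrict p Z) ` solset G Y S"
  have "\<forall>q\<in>Q. \<exists>F. finite F \<and> F \<subseteq> S \<and> q \<notin> (\<lambda>p. restrict p Z) ` solset G Y F"
  proof
    fix q assume "q \<in> Q"
    then have "q \<notin> (\<lambda>p. restrict p Z) ` solset G Y S"
      by (simp add: Q_def)
    then obtain F where "finite F" "F \<subseteq> S" "q \<notin> (\<lambda>p. restrict p Z) ` solset G Y F"
      by (rule not_in_restrict_solset_finite_subsystem[OF assms(1,2)])
    then show "\<exists>F. finite F \<and> F \<subseteq> S \<and> q \<notin> (\<lambda>p. restrict p Z) ` solset G Y F"
      by blast
  qed
  then obtain F where F: "\<And>q. q \<in> Q \<Longrightarrow>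
      finite (F q) \<and> F q \<subseteq> S \<and> q \<notin> (\<lambda>p. restrict p Z) ` solset G Y (F q)"
    by (metis bchoice)
  define S1 where "S1 = (\<Union>q\<in>Q. F q)"
  have "finite Q"
    using assms(1,2) by (simp add: Q_def finite_PiE)
  then have "finite S1" and "S1 \<subseteq> S"
    using F by (auto simp: S1_def)
  moreover have "Z_equivalent G Y Z S S1"
  proof (rule Z_equivalent_subsystemI[OF \<open>S1 \<subseteq> S\<close> assms(3)])
    fix q assume "q \<in> Z \<rightarrow>\<^sub>E carrier G" and "q \<notin> (\<lambda>p. restrict p Z) ` solset G Y S"
    then have "q \<in> Q"
      by (simp add: Q_def)
    then show "q \<notin> (\<lambda>p. restrict p Z) ` solset G Y S1"
      using F solset_antimono[of "F q" S1] by (fastforce simp: S1_def)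
  qed
  ultimately show thesis
    using that by blast
qed

theorem lemma3:
  fixes G :: "('a, 'b) monoid_scheme" and n :: nat
    and S0 :: "(int \<times> nat, 'a \<Rightarrow> 'a) lterm set"
  assumes "group G" and "finite (carrier G)"
    and "is_system (auto G) (Yvars n) S0"
  shows "\<forall>Z. finite Z \<and> Z \<subseteq> Yvars n \<longrightarrow>
           (\<exists>S1. finite S1 \<and> S1 \<subseteq> S0 \<and> Z_equivalent G (Yvars n) Z S0 S1)"
proof (intro allI impI)
  fix Z :: "(int \<times> nat) set"
  assume "finite Z \<and> Z \<subseteq> Yvars n"
  then obtain S1 where "finite S1" and "S1 \<subseteq> S0" and "Z_equivalent G (Yvars n) Z S0 S1"
    using finite_subsystem_Z_equivalent[OF assms(2)] by blast
  then show "\<exists>S1. finite S1 \<and> S1 \<subseteq> S0 \<and> Z_equivalent G (Yvars n) Z S0 S1"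
    by blast
qed

end
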